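(* Let $D$ be an E-simple integral domain with maximal subfield $K$. Let $f\in D\setminus K$ and $u\in K^\times$. Then $\frac{1}{f+u}$ and $\frac1f$ are associates in $R(D)$.
   Context: For an integral domain $D$ with fraction field $F$, the reciprocal complement $R(D)$ is the subring of $F$ generated by all $1/d$, $d\in D\setminus\{0\}$. An element $d\in D$ is Egyptian if $d\in R(D)$. $D$ is E-simple if every Egyptian element of $D$ is a unit; in that case the set $K$ of Egyptian elements of $D$ together with $0$ is a subfield of $D$, called its maximal subfield. *)

theory Defs
  imports "HOL-Computational_Algebra.Fraction_Field"
begin

text \<open>The domain D is the type 'a (class idom); its fraction field is 'a fract,
  with D embedded via d maps to Fract d 1.\<close>

inductive_set recip_compl :: "'a::idom fract set" where
  gen: "d \<noteq> 0 \<Longrightarrow> inverse (Fract d 1) \<in> recip_compl"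
| one: "1 \<in> recip_compl"
| neg: "x \<in> recip_compl \<Longrightarrow> - x \<in> recip_compl"
| add: "x \<in> recip_compl \<Longrightarrow> y \<in> recip_compl \<Longrightarrow> x + y \<in> recip_compl"
| mult: "x \<in> recip_compl \<Longrightarrow> y \<in> recip_compl \<Longrightarrow> x * y \<in> recip_compl"

definition egyptian :: "'a::idom \<Rightarrow> bool" where
  "egyptian d \<longleftrightarrow> d \<noteq> 0 \<and> Fract d 1 \<in> recip_compl"

definition E_simple :: "'a::idom itself \<Rightarrow> bool" where
  "E_simple _ \<longleftrightarrow> (\<forall>d::'a. egyptian d \<longrightarrow> d dvd 1)"

definition max_subfield :: "'a::idom set" where
  "max_subfield = {d. egyptian d} \<union> {0}"

definition assoc_in_R :: "'a::idom fract \<Rightarrow> 'a fract \<Rightarrow> bool" where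
  "assoc_in_R x y \<longleftrightarrow> x \<in> recip_compl \<and> y \<in> recip_compl \<and>
     (\<exists>v\<in>recip_compl. x = v * y) \<and> (\<exists>w\<in>recip_compl. y = w * x)"

end

theory Submission
  imports Defs
begin

text \<open>Since u lies in R(D), both 1 + u/f and 1 - u/(f + u) lie in R(D), and
  1/f = (1 + u/f) \<cdot> 1/(f + u) and 1/(f + u) = (1 - u/(f + u)) \<cdot> 1/f.\<close>

lemma recip_compl_diff:
  "x \<in> recip_compl \<Longrightarrow> y \<in> recip_compl \<Longrightarrow> x - y \<in> recip_compl"
  using recip_compl.add[OF _ recip_compl.neg] by (metis diff_conv_add_uminus)

lemma egyptian_uminus: "egyptian d \<Longrightarrow> egyptian (- d)"
  using recip_compl.neg[of "Fract d 1"] by (simp add: egyptian_def)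

lemma max_subfield_uminus: "u \<in> max_subfield \<Longrightarrow> - u \<in> max_subfield"
  by (auto simp: max_subfield_def egyptian_uminus)

lemma assoc_in_R_inverse_Fract_add:
  fixes f u :: "'a::idom"
  assumes "f \<noteq> 0" and "f + u \<noteq> 0" and u: "Fract u 1 \<in> recip_compl"
  shows "assoc_in_R (inverse (Fract (f + u) 1)) (inverse (Fract f 1))"
proof -
  define F V where "F = Fract f 1" and "V = Fract u 1"
  have "F \<noteq> 0" and "F + V \<noteq> 0"
    using assms(1,2) by (simp_all add: F_def V_def Zero_fract_def eq_fract)
  then have shift_left: "inverse (F + V) = (1 - V * inverse (F + V)) * inverse F"
    and shift_right: "inverse F = (1 + V * inverse F) * inverse (F + V)"
    by (simp_all add: field_simps)
  have inv_F: "inverse F \<in> recip_compl"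
    using assms(1) recip_compl.gen by (simp add: F_def)
  have inv_FV: "inverse (F + V) \<in> recip_compl"
    using assms(2) recip_compl.gen by (simp add: F_def V_def)
  have "1 - V * inverse (F + V) \<in> recip_compl" and "1 + V * inverse F \<in> recip_compl"
    using u inv_F inv_FV
    by (simp_all add: V_def recip_compl_diff recip_compl.add recip_compl.mult recip_compl.one)
  then show ?thesis
    unfolding assoc_in_R_def using inv_F inv_FV shift_left shift_right
    by (auto simp: F_def V_def)
qed

theorem mainTheorem5:
  fixes f u :: "'a::idom"
  assumes "E_simple TYPE('a)"
    and "f \<notin> max_subfield"
    and "u \<in> max_subfield" and "u \<noteq> 0"
  shows "assoc_in_R (inverse (Fract (f + u) 1)) (inverse (Fract f 1))"
proof (rule assoc_in_R_inverse_Fract_add)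
  show "f \<noteq> 0"
    using assms(2) by (auto simp: max_subfield_def)
  show "f + u \<noteq> 0"
  proof
    assume "f + u = 0"
    then have "f = - u" by (simp add: add_eq_0_iff)
    then show False using assms(2,3) max_subfield_uminus by blast
  qed
  show "Fract u 1 \<in> recip_compl"
    using assms(3,4) by (simp add: max_subfield_def egyptian_def)
qed

end
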